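(* Fix $\beta > 0$ and for $\alpha > 0$ let $G_\alpha(s) = \frac{\beta}{\alpha}\exp(-\frac{\beta s}{\alpha})$ for $s \geq 0$ and $G_\alpha(s) = 0$ for $s < 0$. For each $\epsilon > 0$ there exists $C > 0$ such that for all $\tau > 0$, all $\alpha$ with $0 < \alpha \leq \tau / C$, and all $u \in \mathrm{L}^2(\mathbb{R})$ which are constant on each interval $]k\tau,(k+1)\tau[$, $k \in \mathbb{Z}$: $$\| u - G_\alpha \ast u \|_{\mathrm{L}^2(\mathbb{R})} \leq \epsilon \| u\|_{\mathrm{L}^2(\mathbb{R})}.$$
   Context: $\ast$ denotes convolution on $\mathbb{R}$. *)

theory Defs
  imports "HOL-Analysis.Analysis"
begin

definition G_kernel :: "real \<Rightarrow> real \<Rightarrow> real \<Rightarrow> real" where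
  "G_kernel \<beta> \<alpha> s = (if s \<ge> 0 then \<beta> / \<alpha> * exp (- \<beta> * s / \<alpha>) else 0)"

definition conv :: "(real \<Rightarrow> real) \<Rightarrow> (real \<Rightarrow> real) \<Rightarrow> real \<Rightarrow> real" where
  "conv f g x = (LINT y|lborel. f (x - y) * g y)"

definition L2_norm :: "(real \<Rightarrow> real) \<Rightarrow> real" where
  "L2_norm f = sqrt (LINT x|lborel. (f x)\<^sup>2)"

end

theory Submission
  imports Defs "HOL-Probability.Distributions"
begin

text \<open>
  Since \<open>G\<^sub>\<alpha>\<close> is a probability density, Jensen's inequality gives
  \<open>(u - G\<^sub>\<alpha> \<ast> u)(x)\<^sup>2 \<le> \<integral> G\<^sub>\<alpha>(s) (u(x) - u(x - s))\<^sup>2 ds\<close>, and by Fubini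
  \<open>\<parallel>u - G\<^sub>\<alpha> \<ast> u\<parallel>\<^sup>2 \<le> \<integral> G\<^sub>\<alpha>(s) \<parallel>u - u(\<cdot> - s)\<parallel>\<^sup>2 ds\<close>.
  If \<open>u\<close> is constant on the cells \<open>]k\<tau>, (k+1)\<tau>[\<close>, then \<open>u(x) \<noteq> u(x - s)\<close> only when
  \<open>[x - s, x]\<close> contains a grid point, which happens on a set meeting every cell in measure
  at most \<open>|s|\<close>; averaging over cells gives \<open>\<parallel>u - u(\<cdot> - s)\<parallel>\<^sup>2 \<le> (4|s|/\<tau>) \<parallel>u\<parallel>\<^sup>2\<close>.
  As the first moment of \<open>G\<^sub>\<alpha>\<close> is \<open>\<alpha>/\<beta>\<close>, altogether
  \<open>\<parallel>u - G\<^sub>\<alpha> \<ast> u\<parallel>\<^sup>2 \<le> 4\<alpha>/(\<beta>\<tau>) \<parallel>u\<parallel>\<^sup>2\<close>, so \<open>C = 4/(\<beta>\<epsilon>\<^sup>2)\<close> works.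
\<close>

definition constant_on_cells :: "real \<Rightarrow> (real \<Rightarrow> 'a) \<Rightarrow> bool" where
  "constant_on_cells \<tau> u \<longleftrightarrow>
     (\<forall>k::int. \<exists>c. \<forall>x \<in> {of_int k * \<tau> <..< (of_int k + 1) * \<tau>}. u x = c)"

lemma constant_on_cells_comp:
  "constant_on_cells \<tau> u \<Longrightarrow> constant_on_cells \<tau> (\<lambda>x. g (u x))"
  unfolding constant_on_cells_def by metis

lemma floor_divide_eq_iff:
  fixes \<tau> x :: real
  assumes "\<tau> > 0"
  shows "\<lfloor>x / \<tau>\<rfloor> = k \<longleftrightarrow> of_int k * \<tau> \<le> x \<and> x < (of_int k + 1) * \<tau>"
  using assms by (simp add: floor_eq_iff field_simps)

lemma nn_integral_cell_constant:
  fixes f :: "real \<Rightarrow> ennreal"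
  assumes "\<tau> > 0" and f: "constant_on_cells \<tau> f"
    and x: "x \<in> {of_int k * \<tau> <..< (of_int k + 1) * \<tau>}"
  shows "(\<integral>\<^sup>+y. f y * indicator {y. \<lfloor>y / \<tau>\<rfloor> = k} y \<partial>lborel) = f x * ennreal \<tau>"
proof -
  obtain c where c: "\<forall>y \<in> {of_int k * \<tau> <..< (of_int k + 1) * \<tau>}. f y = c"
    using f unfolding constant_on_cells_def by blast
  have "AE y in lborel. y \<noteq> of_int k * \<tau>" by (rule AE_lborel_singleton)
  then have "(\<integral>\<^sup>+y. f y * indicator {y. \<lfloor>y / \<tau>\<rfloor> = k} y \<partial>lborel)
      = (\<integral>\<^sup>+y. c * indicator {of_int k * \<tau> <..< (of_int k + 1) * \<tau>} y \<partial>lborel)"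
    by (intro nn_integral_cong_AE, eventually_elim)
       (use c \<open>\<tau> > 0\<close> in \<open>auto simp: floor_divide_eq_iff indicator_def\<close>)
  also have "\<dots> = c * ennreal \<tau>"
    using \<open>\<tau> > 0\<close> by (simp add: nn_integral_cmult_indicator algebra_simps)
  finally show ?thesis using c x by simp
qed

lemma AE_eq_cell_average:
  fixes f :: "real \<Rightarrow> ennreal"
  assumes "\<tau> > 0" and f: "constant_on_cells \<tau> f"
  shows "AE x in lborel.
    f x = ennreal (1 / \<tau>) * (\<integral>\<^sup>+y. f y * indicator {y. \<lfloor>y / \<tau>\<rfloor> = \<lfloor>x / \<tau>\<rfloor>} y \<partial>lborel)"
proof -
  have "AE x in lborel. x \<notin> range (\<lambda>k::int. of_int k * \<tau>)"
    by (rule AE_I'[OF countable_imp_null_set_lborel[of "range (\<lambda>k::int. of_int k * \<tau>)"]]) auto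
  then show ?thesis
  proof eventually_elim
    case (elim x)
    define k where "k = \<lfloor>x / \<tau>\<rfloor>"
    have "of_int k * \<tau> \<le> x" "x < (of_int k + 1) * \<tau>"
      using floor_divide_eq_iff[OF \<open>\<tau> > 0\<close>] unfolding k_def by blast+
    moreover have "x \<noteq> of_int k * \<tau>" using elim by auto
    ultimately have "x \<in> {of_int k * \<tau> <..< (of_int k + 1) * \<tau>}" by auto
    then have "ennreal (1 / \<tau>) * (\<integral>\<^sup>+y. f y * indicator {y. \<lfloor>y / \<tau>\<rfloor> = k} y \<partial>lborel)
        = f x * (ennreal (1 / \<tau>) * ennreal \<tau>)"
      by (simp add: nn_integral_cell_constant[OF \<open>\<tau> > 0\<close> f] mult_ac)
    also have "\<dots> = f x"
      using \<open>\<tau> > 0\<close> by (simp flip: ennreal_mult')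
    finally show ?case unfolding k_def by simp
  qed
qed

text \<open>Replacing \<open>f x\<close> by its average over the cell of \<open>x\<close> and applying Fubini turns
  the left-hand side into \<open>(1/\<tau>) \<integral> f(y) |E \<inter> cell(y)| dy\<close>.\<close>
lemma nn_integral_indicator_le_cells:
  fixes f :: "real \<Rightarrow> ennreal"
  assumes "\<tau> > 0" and [measurable]: "f \<in> borel_measurable borel" and f: "constant_on_cells \<tau> f"
    and [measurable]: "E \<in> sets borel" and "s \<ge> 0"
    and E: "\<And>k::int. emeasure lborel (E \<inter> {x. \<lfloor>x / \<tau>\<rfloor> = k}) \<le> ennreal s"
  shows "(\<integral>\<^sup>+x. f x * indicator E x \<partial>lborel) \<le> ennreal (s / \<tau>) * (\<integral>\<^sup>+x. f x \<partial>lborel)"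
proof -
  let ?same = "\<lambda>x y. indicator {y. \<lfloor>y / \<tau>\<rfloor> = \<lfloor>x / \<tau>\<rfloor>} y :: ennreal"
  have "(\<integral>\<^sup>+x. f x * indicator E x \<partial>lborel)
      = (\<integral>\<^sup>+x. ennreal (1 / \<tau>) * (\<integral>\<^sup>+y. indicator E x * (f y * ?same x y) \<partial>lborel) \<partial>lborel)"
  proof (intro nn_integral_cong_AE)
    have inner: "(\<integral>\<^sup>+y. indicator E x * (f y * ?same x y) \<partial>lborel)
        = indicator E x * (\<integral>\<^sup>+y. f y * ?same x y \<partial>lborel)" for x
      by (rule nn_integral_cmult) measurable
    from AE_eq_cell_average[OF \<open>\<tau> > 0\<close> f] show "AE x in lborel. f x * indicator E x
        = ennreal (1 / \<tau>) * (\<integral>\<^sup>+y. indicator E x * (f y * ?same x y) \<partial>lborel)"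
      by eventually_elim (simp only: inner, simp add: mult_ac)
  qed
  also have "\<dots> = ennreal (1 / \<tau>) * (\<integral>\<^sup>+y. (\<integral>\<^sup>+x. indicator E x * (f y * ?same x y) \<partial>lborel) \<partial>lborel)"
    by (subst lborel_pair.Fubini') (auto intro: nn_integral_cmult)
  also have "\<dots> = ennreal (1 / \<tau>) * (\<integral>\<^sup>+y. f y * emeasure lborel (E \<inter> {x. \<lfloor>x / \<tau>\<rfloor> = \<lfloor>y / \<tau>\<rfloor>}) \<partial>lborel)"
  proof -
    have "(\<integral>\<^sup>+x. indicator E x * (f y * ?same x y) \<partial>lborel)
        = (\<integral>\<^sup>+x. f y * indicator (E \<inter> {x. \<lfloor>x / \<tau>\<rfloor> = \<lfloor>y / \<tau>\<rfloor>}) x \<partial>lborel)" for y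
      by (rule nn_integral_cong) (auto simp: indicator_def)
    then show ?thesis by (simp add: nn_integral_cmult_indicator)
  qed
  also have "\<dots> \<le> ennreal (1 / \<tau>) * (\<integral>\<^sup>+y. f y * ennreal s \<partial>lborel)"
    by (intro mult_left_mono nn_integral_mono) (auto intro: mult_left_mono E)
  also have "\<dots> = ennreal (1 / \<tau>) * ennreal s * (\<integral>\<^sup>+x. f x \<partial>lborel)"
    by (subst nn_integral_multc) (auto simp: mult_ac)
  also have "ennreal (1 / \<tau>) * ennreal s = ennreal (s / \<tau>)"
    using \<open>s \<ge> 0\<close> \<open>\<tau> > 0\<close> by (simp flip: ennreal_mult')
  finally show ?thesis .
qed

text \<open>\<open>x \<in> crosses_grid \<tau> s\<close> iff \<open>[x - s, x]\<close> contains a point of \<open>\<tau>\<int>\<close>.\<close>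
definition crosses_grid :: "real \<Rightarrow> real \<Rightarrow> real set" where
  "crosses_grid \<tau> s = {x. \<lceil>(x - s) / \<tau>\<rceil> \<le> \<lfloor>x / \<tau>\<rfloor>}"

lemma crosses_grid_measurable [measurable]: "crosses_grid \<tau> s \<in> sets borel"
  unfolding crosses_grid_def by measurable

lemma constant_on_cells_shift_eq:
  assumes "\<tau> > 0" "s \<ge> 0" and u: "constant_on_cells \<tau> u" and x: "x \<notin> crosses_grid \<tau> s"
  shows "u (x - s) = u x"
proof -
  define k where "k = \<lfloor>x / \<tau>\<rfloor>"
  have "of_int k < (x - s) / \<tau>"
    using x unfolding crosses_grid_def k_def by (simp add: not_le less_ceiling_iff)
  then have "of_int k * \<tau> < x - s" using \<open>\<tau> > 0\<close> by (simp add: field_simps)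
  moreover have "x < (of_int k + 1) * \<tau>"
    using floor_divide_eq_iff[OF \<open>\<tau> > 0\<close>] unfolding k_def by blast
  moreover obtain c where "\<forall>y \<in> {of_int k * \<tau> <..< (of_int k + 1) * \<tau>}. u y = c"
    using u unfolding constant_on_cells_def by blast
  ultimately show ?thesis using \<open>s \<ge> 0\<close> by auto
qed

lemma emeasure_crosses_grid_cell:
  assumes "\<tau> > 0" "s \<ge> 0"
  shows "emeasure lborel (crosses_grid \<tau> s \<inter> {x. \<lfloor>x / \<tau>\<rfloor> = k}) \<le> ennreal s"
proof -
  have "crosses_grid \<tau> s \<inter> {x. \<lfloor>x / \<tau>\<rfloor> = k} \<subseteq> {of_int k * \<tau> .. of_int k * \<tau> + s}"
  proof
    fix x assume x: "x \<in> crosses_grid \<tau> s \<inter> {x. \<lfloor>x / \<tau>\<rfloor> = k}"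
    then have "(x - s) / \<tau> \<le> of_int k"
      by (auto simp: crosses_grid_def ceiling_le_iff)
    then show "x \<in> {of_int k * \<tau> .. of_int k * \<tau> + s}"
      using x floor_divide_eq_iff[OF \<open>\<tau> > 0\<close>, of x k] \<open>\<tau> > 0\<close> by (auto simp: field_simps)
  qed
  then have "emeasure lborel (crosses_grid \<tau> s \<inter> {x. \<lfloor>x / \<tau>\<rfloor> = k})
      \<le> emeasure lborel {of_int k * \<tau> .. of_int k * \<tau> + s}"
    by (rule emeasure_mono) simp
  then show ?thesis using \<open>s \<ge> 0\<close> by simp
qed

lemma emeasure_crosses_grid_translate_cell:
  assumes "\<tau> > 0" "s \<ge> 0"
  shows "emeasure lborel ({x. x + s \<in> crosses_grid \<tau> s} \<inter> {x. \<lfloor>x / \<tau>\<rfloor> = k}) \<le> ennreal s"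
proof -
  let ?b = "(of_int k + 1) * \<tau>"
  have "{x. x + s \<in> crosses_grid \<tau> s} \<inter> {x. \<lfloor>x / \<tau>\<rfloor> = k} \<subseteq> {of_int k * \<tau>} \<union> {?b - s .. ?b}"
  proof
    fix x assume x: "x \<in> {x. x + s \<in> crosses_grid \<tau> s} \<inter> {x. \<lfloor>x / \<tau>\<rfloor> = k}"
    then have cross: "\<lceil>x / \<tau>\<rceil> \<le> \<lfloor>(x + s) / \<tau>\<rfloor>" and cell: "of_int k * \<tau> \<le> x" "x < ?b"
      using floor_divide_eq_iff[OF \<open>\<tau> > 0\<close>, of x k] by (auto simp: crosses_grid_def)
    show "x \<in> {of_int k * \<tau>} \<union> {?b - s .. ?b}"
    proof (cases "x = of_int k * \<tau>")
      case False
      then have "\<lceil>x / \<tau>\<rceil> = k + 1"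
        using cell \<open>\<tau> > 0\<close> by (simp add: ceiling_eq_iff field_simps)
      then have "of_int k + 1 \<le> (x + s) / \<tau>" using cross by linarith
      then show ?thesis using cell \<open>\<tau> > 0\<close> by (simp add: field_simps)
    qed simp
  qed
  then have "emeasure lborel ({x. x + s \<in> crosses_grid \<tau> s} \<inter> {x. \<lfloor>x / \<tau>\<rfloor> = k})
      \<le> emeasure lborel ({of_int k * \<tau>} \<union> {?b - s .. ?b})"
    by (rule emeasure_mono) simp
  also have "\<dots> \<le> emeasure lborel {of_int k * \<tau>} + emeasure lborel {?b - s .. ?b}"
    by (rule emeasure_subadditive) auto
  also have "\<dots> = ennreal s" using \<open>s \<ge> 0\<close> by simp
  finally show ?thesis .
qed

lemma nn_integral_shift_diff_le:
  fixes u :: "real \<Rightarrow> real"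
  assumes "\<tau> > 0" "s \<ge> 0" and [measurable]: "u \<in> borel_measurable borel"
    and u: "constant_on_cells \<tau> u"
  shows "(\<integral>\<^sup>+x. ennreal ((u x - u (x - s))\<^sup>2) \<partial>lborel)
    \<le> ennreal (4 * s / \<tau>) * (\<integral>\<^sup>+x. ennreal ((u x)\<^sup>2) \<partial>lborel)"
proof -
  let ?E = "crosses_grid \<tau> s" and ?U = "\<integral>\<^sup>+x. ennreal ((u x)\<^sup>2) \<partial>lborel"
  have u2: "constant_on_cells \<tau> (\<lambda>x. ennreal ((u x)\<^sup>2))"
    using u by (rule constant_on_cells_comp)
  have "ennreal ((u x - u (x - s))\<^sup>2)
      \<le> 2 * (ennreal ((u x)\<^sup>2) * indicator ?E x) + 2 * (ennreal ((u (x - s))\<^sup>2) * indicator ?E x)"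
    for x
  proof (cases "x \<in> ?E")
    case True
    have "(u x - u (x - s))\<^sup>2 \<le> 2 * (u x)\<^sup>2 + 2 * (u (x - s))\<^sup>2"
      using zero_le_power2[of "u x + u (x - s)"] by (simp add: power2_eq_square algebra_simps)
    then have "ennreal ((u x - u (x - s))\<^sup>2) \<le> ennreal (2 * (u x)\<^sup>2 + 2 * (u (x - s))\<^sup>2)"
      by (rule ennreal_leI)
    then show ?thesis
      using True by (simp add: ennreal_plus ennreal_mult)
  qed (simp add: constant_on_cells_shift_eq[OF assms(1,2) u])
  then have "(\<integral>\<^sup>+x. ennreal ((u x - u (x - s))\<^sup>2) \<partial>lborel)
      \<le> 2 * (\<integral>\<^sup>+x. ennreal ((u x)\<^sup>2) * indicator ?E x \<partial>lborel)
        + 2 * (\<integral>\<^sup>+x. ennreal ((u (x - s))\<^sup>2) * indicator ?E x \<partial>lborel)"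
    by (subst nn_integral_cmult[symmetric] nn_integral_add[symmetric], measurable)+
       (rule nn_integral_mono)
  also have "(\<integral>\<^sup>+x. ennreal ((u (x - s))\<^sup>2) * indicator ?E x \<partial>lborel)
      = (\<integral>\<^sup>+x. ennreal ((u x)\<^sup>2) * indicator {x. x + s \<in> ?E} x \<partial>lborel)"
    using nn_integral_real_affine[of "\<lambda>x. ennreal ((u (x - s))\<^sup>2) * indicator ?E x" 1 s]
    by (simp add: indicator_def add.commute)
  also have "(\<integral>\<^sup>+x. ennreal ((u x)\<^sup>2) * indicator ?E x \<partial>lborel) \<le> ennreal (s / \<tau>) * ?U"
    by (rule nn_integral_indicator_le_cells[OF \<open>\<tau> > 0\<close> _ u2 _ \<open>s \<ge> 0\<close>
          emeasure_crosses_grid_cell[OF \<open>\<tau> > 0\<close> \<open>s \<ge> 0\<close>]]) measurable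
  also have "(\<integral>\<^sup>+x. ennreal ((u x)\<^sup>2) * indicator {x. x + s \<in> ?E} x \<partial>lborel) \<le> ennreal (s / \<tau>) * ?U"
    by (rule nn_integral_indicator_le_cells[OF \<open>\<tau> > 0\<close> _ u2 _ \<open>s \<ge> 0\<close>
          emeasure_crosses_grid_translate_cell[OF \<open>\<tau> > 0\<close> \<open>s \<ge> 0\<close>]]) measurable
  also have "2 * (ennreal (s / \<tau>) * ?U) + 2 * (ennreal (s / \<tau>) * ?U) = ennreal (4 * s / \<tau>) * ?U"
  proof -
    have "ennreal (4 * s / \<tau>) = 4 * ennreal (s / \<tau>)"
      using ennreal_mult'[of 4 "s / \<tau>"] by simp
    then show ?thesis by (simp flip: distrib_right mult.assoc)
  qed
  finally show ?thesis by (simp add: add_mono mult_left_mono)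
qed

lemma nn_integral_shift_diff_abs_le:
  fixes u :: "real \<Rightarrow> real"
  assumes "\<tau> > 0" and [measurable]: "u \<in> borel_measurable borel" and u: "constant_on_cells \<tau> u"
  shows "(\<integral>\<^sup>+x. ennreal ((u x - u (x - s))\<^sup>2) \<partial>lborel)
    \<le> ennreal (4 * \<bar>s\<bar> / \<tau>) * (\<integral>\<^sup>+x. ennreal ((u x)\<^sup>2) \<partial>lborel)"
proof (cases "s \<ge> 0")
  case False
  have "(\<integral>\<^sup>+x. ennreal ((u x - u (x - s))\<^sup>2) \<partial>lborel)
      = (\<integral>\<^sup>+x. ennreal ((u x - u (x - (- s)))\<^sup>2) \<partial>lborel)"
    using nn_integral_real_affine[of "\<lambda>x. ennreal ((u x - u (x - s))\<^sup>2)" 1 s]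
    by (simp add: add.commute power2_commute)
  with nn_integral_shift_diff_le[OF \<open>\<tau> > 0\<close> _ _ u, of "- s"] False show ?thesis by simp
qed (simp add: nn_integral_shift_diff_le[OF \<open>\<tau> > 0\<close> _ _ u])

lemma integrable_weighted_if_weighted_power2:
  fixes w h :: "real \<Rightarrow> real"
  assumes "integrable lborel w" "\<And>y. w y \<ge> 0" and [measurable]: "h \<in> borel_measurable borel"
    and "integrable lborel (\<lambda>y. w y * (h y)\<^sup>2)"
  shows "integrable lborel (\<lambda>y. w y * h y)"
proof (rule Bochner_Integration.integrable_bound[of _ "\<lambda>y. w y + w y * (h y)\<^sup>2"])
  show "integrable lborel (\<lambda>y. w y + w y * (h y)\<^sup>2)" using assms by simp
  have "\<bar>h y\<bar> \<le> 1 + (h y)\<^sup>2" for y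
    using zero_le_power2[of "\<bar>h y\<bar> - 1"] by (simp add: power2_diff)
  then have "w y * \<bar>h y\<bar> \<le> w y * (1 + (h y)\<^sup>2)" for y
    by (rule mult_left_mono) (rule assms(2))
  then show "AE y in lborel. norm (w y * h y) \<le> norm (w y + w y * (h y)\<^sup>2)"
    using assms(2) by (simp add: abs_mult distrib_left)
  show "(\<lambda>y. w y * h y) \<in> borel_measurable lborel"
    using borel_measurable_integrable[OF assms(1)] by measurable
qed

lemma power2_integral_le_weighted:
  fixes w h :: "real \<Rightarrow> real"
  assumes "\<And>y. w y \<ge> 0" "integrable lborel w" "(LINT y|lborel. w y) = 1"
    and "integrable lborel (\<lambda>y. w y * h y)" "integrable lborel (\<lambda>y. w y * (h y)\<^sup>2)"
  shows "(LINT y|lborel. w y * h y)\<^sup>2 \<le> (LINT y|lborel. w y * (h y)\<^sup>2)"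
proof -
  define m where "m = (LINT y|lborel. w y * h y)"
  have "0 \<le> (LINT y|lborel. w y * (h y - m)\<^sup>2)"
    using assms(1) by (intro integral_nonneg_AE) auto
  also have "(LINT y|lborel. w y * (h y - m)\<^sup>2) = (LINT y|lborel. w y * (h y)\<^sup>2 - (2 * m) * (w y * h y) + m\<^sup>2 * w y)"
    by (rule Bochner_Integration.integral_cong) (auto simp: power2_eq_square algebra_simps)
  also have "\<dots> = (LINT y|lborel. w y * (h y)\<^sup>2) - m\<^sup>2"
    using assms(2-) by (simp add: m_def power2_eq_square)
  finally show ?thesis by (simp add: m_def)
qed

lemma power2_diff_conv_le:
  fixes K u :: "real \<Rightarrow> real"
  assumes [measurable]: "K \<in> borel_measurable borel" "u \<in> borel_measurable borel"
    and K0: "\<And>s. K s \<ge> 0" and K1: "(\<integral>\<^sup>+s. ennreal (K s) \<partial>lborel) = 1"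
  shows "ennreal ((u x - conv K u x)\<^sup>2) \<le> (\<integral>\<^sup>+s. ennreal (K s * (u x - u (x - s))\<^sup>2) \<partial>lborel)"
proof (cases "(\<integral>\<^sup>+s. ennreal (K s * (u x - u (x - s))\<^sup>2) \<partial>lborel) = \<infinity>")
  case False
  define h where "h s = u x - u (x - s)" for s
  have [measurable]: "h \<in> borel_measurable borel" unfolding h_def by measurable
  have Ki: "integrable lborel K"
    using K0 K1 by (intro integrableI_nonneg) auto
  have Kint: "(LINT s|lborel. K s) = 1"
    using integral_eq_nn_integral[of K lborel] K0 K1 by simp
  have Kh2: "integrable lborel (\<lambda>s. K s * (h s)\<^sup>2)"
    using False K0 by (intro integrableI_nonneg) (auto simp: h_def top.not_eq_extremum)
  txt \<open>Finiteness of the right-hand side makes \<open>K s * u (x - s)\<close> integrable, so \<open>conv K u x\<close>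
    is a genuine integral and not the junk value \<open>0\<close>.\<close>
  have Kh: "integrable lborel (\<lambda>s. K s * h s)"
    by (rule integrable_weighted_if_weighted_power2[OF Ki K0 _ Kh2]) measurable
  have "conv K u x = (LINT s|lborel. K s * u (x - s))"
    using lborel_integral_real_affine[of "-1" "\<lambda>y. K (x - y) * u y" x] by (simp add: conv_def)
  also have "\<dots> = (LINT s|lborel. u x * K s - K s * h s)"
    by (simp add: h_def algebra_simps)
  also have "\<dots> = u x - (LINT s|lborel. K s * h s)"
    using Ki Kh Kint by simp
  finally have "(u x - conv K u x)\<^sup>2 \<le> (LINT s|lborel. K s * (h s)\<^sup>2)"
    using power2_integral_le_weighted[OF K0 Ki Kint Kh Kh2] by simp
  moreover have "(\<integral>\<^sup>+s. ennreal (K s * (h s)\<^sup>2) \<partial>lborel) = ennreal (LINT s|lborel. K s * (h s)\<^sup>2)"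
    using Kh2 K0 by (intro nn_integral_eq_integral) auto
  ultimately show ?thesis by (simp add: h_def ennreal_leI)
qed simp

lemma nn_integral_power2_diff_conv_le:
  fixes K u :: "real \<Rightarrow> real"
  assumes [measurable]: "K \<in> borel_measurable borel" "u \<in> borel_measurable borel"
    and K0: "\<And>s. K s \<ge> 0" and K1: "(\<integral>\<^sup>+s. ennreal (K s) \<partial>lborel) = 1"
  shows "(\<integral>\<^sup>+x. ennreal ((u x - conv K u x)\<^sup>2) \<partial>lborel)
    \<le> (\<integral>\<^sup>+s. ennreal (K s) * (\<integral>\<^sup>+x. ennreal ((u x - u (x - s))\<^sup>2) \<partial>lborel) \<partial>lborel)"
proof -
  have "(\<integral>\<^sup>+x. ennreal ((u x - conv K u x)\<^sup>2) \<partial>lborel)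
      \<le> (\<integral>\<^sup>+x. \<integral>\<^sup>+s. ennreal (K s) * ennreal ((u x - u (x - s))\<^sup>2) \<partial>lborel \<partial>lborel)"
    by (intro nn_integral_mono)
       (simp add: power2_diff_conv_le[OF assms] K0 flip: ennreal_mult)
  also have "\<dots> = (\<integral>\<^sup>+s. \<integral>\<^sup>+x. ennreal (K s) * ennreal ((u x - u (x - s))\<^sup>2) \<partial>lborel \<partial>lborel)"
    by (rule lborel_pair.Fubini') measurable
  also have "\<dots> = (\<integral>\<^sup>+s. ennreal (K s) * (\<integral>\<^sup>+x. ennreal ((u x - u (x - s))\<^sup>2) \<partial>lborel) \<partial>lborel)"
    by (intro nn_integral_cong nn_integral_cmult) measurable
  finally show ?thesis .
qed

lemma nn_integral_power2_diff_conv_cells_le: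
  fixes K u :: "real \<Rightarrow> real"
  assumes [measurable]: "K \<in> borel_measurable borel" "u \<in> borel_measurable borel"
    and K0: "\<And>s. K s \<ge> 0" and K1: "(\<integral>\<^sup>+s. ennreal (K s) \<partial>lborel) = 1"
    and "\<tau> > 0" and u: "constant_on_cells \<tau> u"
  shows "(\<integral>\<^sup>+x. ennreal ((u x - conv K u x)\<^sup>2) \<partial>lborel)
    \<le> ennreal (4 / \<tau>) * (\<integral>\<^sup>+s. ennreal (K s * \<bar>s\<bar>) \<partial>lborel) * (\<integral>\<^sup>+x. ennreal ((u x)\<^sup>2) \<partial>lborel)"
proof -
  let ?U = "\<integral>\<^sup>+x. ennreal ((u x)\<^sup>2) \<partial>lborel"
  have "ennreal (K s) * (\<integral>\<^sup>+x. ennreal ((u x - u (x - s))\<^sup>2) \<partial>lborel)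
      \<le> ennreal (K s * \<bar>s\<bar>) * (ennreal (4 / \<tau>) * ?U)" for s
  proof -
    have "ennreal (K s) * ennreal (4 * \<bar>s\<bar> / \<tau>) = ennreal (K s * \<bar>s\<bar>) * ennreal (4 / \<tau>)"
      using K0[of s] \<open>\<tau> > 0\<close> by (simp flip: ennreal_mult)
    with nn_integral_shift_diff_abs_le[OF \<open>\<tau> > 0\<close> _ u, of s] show ?thesis
      by (metis (no_types, lifting) assms(2) mult.assoc mult_left_mono zero_le)
  qed
  then have "(\<integral>\<^sup>+s. ennreal (K s) * (\<integral>\<^sup>+x. ennreal ((u x - u (x - s))\<^sup>2) \<partial>lborel) \<partial>lborel)
      \<le> (\<integral>\<^sup>+s. ennreal (K s * \<bar>s\<bar>) \<partial>lborel) * (ennreal (4 / \<tau>) * ?U)"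
    by (subst nn_integral_multc[symmetric]) (auto intro: nn_integral_mono)
  with nn_integral_power2_diff_conv_le[OF assms(1-4)] show ?thesis
    by (simp add: mult_ac)
qed

lemma L2_norm_le_if_nn_integral_le:
  fixes f g :: "real \<Rightarrow> real"
  assumes [measurable]: "f \<in> borel_measurable borel" and "c \<ge> 0"
    and le: "(\<integral>\<^sup>+x. ennreal ((f x)\<^sup>2) \<partial>lborel) \<le> ennreal (c\<^sup>2 * (LINT x|lborel. (g x)\<^sup>2))"
  shows "L2_norm f \<le> c * L2_norm g"
proof -
  have "(LINT x|lborel. (f x)\<^sup>2) = enn2real (\<integral>\<^sup>+x. ennreal ((f x)\<^sup>2) \<partial>lborel)"
    by (rule integral_eq_nn_integral) auto
  also have "\<dots> \<le> c\<^sup>2 * (LINT x|lborel. (g x)\<^sup>2)"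
    using enn2real_mono[OF le] by simp
  finally have "L2_norm f \<le> sqrt (c\<^sup>2 * (LINT x|lborel. (g x)\<^sup>2))"
    unfolding L2_norm_def by simp
  also have "\<dots> = c * L2_norm g"
    using \<open>c \<ge> 0\<close> by (simp add: L2_norm_def real_sqrt_mult)
  finally show ?thesis .
qed

lemma G_kernel_eq_erlang_density: "G_kernel \<beta> \<alpha> = erlang_density 0 (\<beta> / \<alpha>)"
  by (auto simp: fun_eq_iff G_kernel_def erlang_density_def)

lemma G_kernel_measurable [measurable]: "G_kernel \<beta> \<alpha> \<in> borel_measurable borel"
  by (simp add: G_kernel_eq_erlang_density)

lemma G_kernel_nonneg: "\<beta> > 0 \<Longrightarrow> \<alpha> > 0 \<Longrightarrow> G_kernel \<beta> \<alpha> s \<ge> 0"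
  by (simp add: G_kernel_def)

lemma nn_integral_G_kernel: "\<beta> > 0 \<Longrightarrow> \<alpha> > 0 \<Longrightarrow> (\<integral>\<^sup>+s. ennreal (G_kernel \<beta> \<alpha> s) \<partial>lborel) = 1"
  using nn_integral_erlang_ith_moment[of "\<beta> / \<alpha>" 0 0] by (simp add: G_kernel_eq_erlang_density)

lemma nn_integral_G_kernel_abs_moment:
  assumes "\<beta> > 0" "\<alpha> > 0"
  shows "(\<integral>\<^sup>+s. ennreal (G_kernel \<beta> \<alpha> s * \<bar>s\<bar>) \<partial>lborel) = ennreal (\<alpha> / \<beta>)"
proof -
  have "(\<integral>\<^sup>+s. ennreal (G_kernel \<beta> \<alpha> s * \<bar>s\<bar>) \<partial>lborel)
      = (\<integral>\<^sup>+s. ennreal (G_kernel \<beta> \<alpha> s * s) \<partial>lborel)"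
    by (intro nn_integral_cong) (simp add: G_kernel_def)
  then show ?thesis
    using nn_integral_erlang_ith_moment[of "\<beta> / \<alpha>" 0 1] assms
    by (simp add: G_kernel_eq_erlang_density)
qed

lemma L2_norm_diff_conv_G_kernel_le:
  fixes u :: "real \<Rightarrow> real"
  assumes "\<beta> > 0" "\<alpha> > 0" "\<tau> > 0" "\<epsilon> \<ge> 0" and small: "4 * \<alpha> \<le> \<epsilon>\<^sup>2 * \<beta> * \<tau>"
    and [measurable]: "u \<in> borel_measurable borel" and u2: "integrable lborel (\<lambda>x. (u x)\<^sup>2)"
    and cells: "constant_on_cells \<tau> u"
  shows "L2_norm (\<lambda>x. u x - conv (G_kernel \<beta> \<alpha>) u x) \<le> \<epsilon> * L2_norm u"
proof (rule L2_norm_le_if_nn_integral_le)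
  let ?I = "LINT x|lborel. (u x)\<^sup>2"
  have "(\<integral>\<^sup>+x. ennreal ((u x - conv (G_kernel \<beta> \<alpha>) u x)\<^sup>2) \<partial>lborel)
      \<le> ennreal (4 / \<tau>) * ennreal (\<alpha> / \<beta>) * ennreal ?I"
    using nn_integral_power2_diff_conv_cells_le[OF _ _ G_kernel_nonneg nn_integral_G_kernel
        \<open>\<tau> > 0\<close> cells] nn_integral_G_kernel_abs_moment nn_integral_eq_integral[OF u2] assms(1,2)
    by simp
  also have "\<dots> = ennreal (4 * \<alpha> / (\<beta> * \<tau>) * ?I)"
    using assms(1-3) by (simp add: ennreal_mult' flip: ennreal_mult)
  also have "\<dots> \<le> ennreal (\<epsilon>\<^sup>2 * ?I)"
    using small assms(1-3) by (intro ennreal_leI mult_right_mono) (auto simp: field_simps)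
  finally show "(\<integral>\<^sup>+x. ennreal ((u x - conv (G_kernel \<beta> \<alpha>) u x)\<^sup>2) \<partial>lborel) \<le> ennreal (\<epsilon>\<^sup>2 * ?I)" .
qed (auto simp: conv_def \<open>\<epsilon> \<ge> 0\<close>)

theorem proposition17:
  fixes \<beta> :: real
  assumes "\<beta> > 0"
  shows "\<forall>\<epsilon>>0. \<exists>C>0. \<forall>\<tau>>0. \<forall>\<alpha>. 0 < \<alpha> \<and> \<alpha> \<le> \<tau> / C \<longrightarrow>
           (\<forall>u :: real \<Rightarrow> real.
              u \<in> borel_measurable lborel \<and> integrable lborel (\<lambda>x. (u x)\<^sup>2) \<and>
              (\<forall>k::int. \<exists>c. \<forall>x \<in> {of_int k * \<tau> <..< (of_int k + 1) * \<tau>}. u x = c)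
              \<longrightarrow> L2_norm (\<lambda>x. u x - conv (G_kernel \<beta> \<alpha>) u x) \<le> \<epsilon> * L2_norm u)"
proof (unfold constant_on_cells_def[symmetric], intro allI impI)
  fix \<epsilon> :: real assume "\<epsilon> > 0"
  have "4 * \<alpha> \<le> \<epsilon>\<^sup>2 * \<beta> * \<tau>" if "\<alpha> \<le> \<tau> / (4 / (\<beta> * \<epsilon>\<^sup>2))" for \<alpha> \<tau>
    using that by (simp add: field_simps)
  with L2_norm_diff_conv_G_kernel_le[OF assms] \<open>\<epsilon> > 0\<close> assms
  show "\<exists>C>0. \<forall>\<tau>>0. \<forall>\<alpha>. 0 < \<alpha> \<and> \<alpha> \<le> \<tau> / C \<longrightarrow>
      (\<forall>u. u \<in> borel_measurable lborel \<and> integrable lborel (\<lambda>x. (u x)\<^sup>2) \<and> constant_on_cells \<tau> u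
        \<longrightarrow> L2_norm (\<lambda>x. u x - conv (G_kernel \<beta> \<alpha>) u x) \<le> \<epsilon> * L2_norm u)"
    by (intro exI[of _ "4 / (\<beta> * \<epsilon>\<^sup>2)"]) auto
qed

end
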